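(* Let $\pi$ be a permutation-invariant probability density on $\mathbb{X}^n$ and $q$ a probability density on $\mathbb{X}$, and let $P_{\mathrm{SOMA}}$ and $P_{\mathrm{RAN}}$ be the Markov transition kernels of the SOMA sampler and of the random-scan independent-Metropolis-within-Gibbs sampler (Ran-IMwG). Then for $\pi$-almost all $x,x'\in\mathbb{X}^n$ with $d(x,x')=1$, $$P_{\mathrm{SOMA}}(x'\mid x)\le n\,P_{\mathrm{RAN}}(x'\mid x).$$
   Context: Permutation invariance: $\pi(x_{\sigma(1)},\dots,x_{\sigma(n)})=\pi(x)$ for all permutations $\sigma$. $[x_{-i},y]$ is $x$ with its $i$-th component replaced by $y$. Weights: $w_i(y,x)=\pi([x_{-i},y])/\big(q(y)\prod_{j\ne i}q(x_j)\big)$ ($1\le i\le n$), $w_0(y,x)=\pi(x)/\prod_j q(x_j)$, $W=\sum_{i=1}^n w_i$ (well-defined, positive). SOMA: from $x$, draw $y\sim q$, pick $I$ with probability $w_I/W$, move to $[x_{-I},y]$ with probability $\min\{1,W/(W+w_0-w_I)\}$, else stay. Ran-IMwG: from $x$, pick $I$ uniformly in $\{1,\dots,n\}$, draw $y\sim q$, move to $[x_{-I},y]$ with probability $\min\{1,\pi([x_{-I},y])q(x_I)/(\pi(x)q(y))\}$, else stay. $P(x'\mid x)$ for $x'\neq x$ denotes the (off-diagonal) transition density. $d(x,x')=\min_{\sigma\in S_n}\|x_\sigma-x'\|_0$ is the number of differing components up to permutation. *)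

theory Defs
  imports "HOL-Probability.Probability"
begin

text \<open>Points of X^n are extensional functions on the index set {..<n}
  (components indexed 0..n-1 instead of 1..n).  The base space X carries a
  reference measure M; q and pi are densities w.r.t. M and the product of M.\<close>

definition sp_n :: "nat \<Rightarrow> 'a measure \<Rightarrow> (nat \<Rightarrow> 'a) measure" where
  "sp_n n M = PiM {..<n} (\<lambda>_. M)"

definition permv :: "nat \<Rightarrow> (nat \<Rightarrow> nat) \<Rightarrow> (nat \<Rightarrow> 'a) \<Rightarrow> (nat \<Rightarrow> 'a)" where
  "permv n \<sigma> x = (\<lambda>i\<in>{..<n}. x (\<sigma> i))"

definition perm_invariant :: "nat \<Rightarrow> ((nat \<Rightarrow> 'a) \<Rightarrow> real) \<Rightarrow> bool" where
  "perm_invariant n \<pi> \<longleftrightarrow> (\<forall>x\<in>extensional {..<n}. \<forall>\<sigma>. \<sigma> permutes {..<n} \<longrightarrow> \<pi> (permv n \<sigma> x) = \<pi> x)"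

definition dist_perm :: "nat \<Rightarrow> (nat \<Rightarrow> 'a) \<Rightarrow> (nat \<Rightarrow> 'a) \<Rightarrow> nat" where
  "dist_perm n x x' = Min ((\<lambda>\<sigma>. card {i\<in>{..<n}. permv n \<sigma> x i \<noteq> x' i}) ` {\<sigma>. \<sigma> permutes {..<n}})"

text \<open>Weights.  [x_{-i},y] is x(i := y).\<close>
definition w_i :: "nat \<Rightarrow> ((nat \<Rightarrow> 'a) \<Rightarrow> real) \<Rightarrow> ('a \<Rightarrow> real) \<Rightarrow> nat \<Rightarrow> 'a \<Rightarrow> (nat \<Rightarrow> 'a) \<Rightarrow> real" where
  "w_i n \<pi> q i y x = \<pi> (x(i := y)) / (q y * (\<Prod>j\<in>{..<n} - {i}. q (x j)))"

definition w_0 :: "nat \<Rightarrow> ((nat \<Rightarrow> 'a) \<Rightarrow> real) \<Rightarrow> ('a \<Rightarrow> real) \<Rightarrow> (nat \<Rightarrow> 'a) \<Rightarrow> real" where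
  "w_0 n \<pi> q x = \<pi> x / (\<Prod>j\<in>{..<n}. q (x j))"

definition W_sum :: "nat \<Rightarrow> ((nat \<Rightarrow> 'a) \<Rightarrow> real) \<Rightarrow> ('a \<Rightarrow> real) \<Rightarrow> 'a \<Rightarrow> (nat \<Rightarrow> 'a) \<Rightarrow> real" where
  "W_sum n \<pi> q y x = (\<Sum>i\<in>{..<n}. w_i n \<pi> q i y x)"

text \<open>Off-diagonal transition densities P(x'|x), x' \<noteq> x.  Both kernels only move
  from x to states x(i := y); the density of such a move is taken w.r.t. M on
  the replaced coordinate y = x' i.  The sum ranges over the indices i at which
  x' is obtained from x by replacing component i (for x' \<noteq> x at most one i).\<close>
definition P_SOMA :: "nat \<Rightarrow> ((nat \<Rightarrow> 'a) \<Rightarrow> real) \<Rightarrow> ('a \<Rightarrow> real) \<Rightarrow> (nat \<Rightarrow> 'a) \<Rightarrow> (nat \<Rightarrow> 'a) \<Rightarrow> real" where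
  "P_SOMA n \<pi> q x' x =
     (\<Sum>i\<in>{i\<in>{..<n}. x' = x(i := x' i)}.
        let y = x' i; W = W_sum n \<pi> q y x; wi = w_i n \<pi> q i y x; w0 = w_0 n \<pi> q x
        in q y * (wi / W) * min 1 (W / (W + w0 - wi)))"

definition P_RAN :: "nat \<Rightarrow> ((nat \<Rightarrow> 'a) \<Rightarrow> real) \<Rightarrow> ('a \<Rightarrow> real) \<Rightarrow> (nat \<Rightarrow> 'a) \<Rightarrow> (nat \<Rightarrow> 'a) \<Rightarrow> real" where
  "P_RAN n \<pi> q x' x =
     (\<Sum>i\<in>{i\<in>{..<n}. x' = x(i := x' i)}.
        let y = x' i
        in (1 / real n) * q y * min 1 (\<pi> x' * q (x i) / (\<pi> x * q y)))"

end

theory Submission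
  imports Defs
begin

text \<open>A move of either sampler replaces one coordinate x i by y.  SOMA proposes it with
  density q y \<cdot> w_i / W and accepts with probability min 1 (W / (W + w_0 - w_i)); since
  W \<ge> w_i and W + w_0 - w_i \<ge> w_0, this product is at most q y \<cdot> min 1 (w_i / w_0).  The
  quotient w_i / w_0 is exactly the acceptance ratio of the independence proposal q, so the
  bound is n times the density of Ran-IMwG, which selects the coordinate i with
  probability 1 / n.  The bound holds index by index for every x with \<pi> x > 0 and all
  q (x j) > 0.\<close>

lemma selection_times_acceptance_le:
  fixes wi W w0 :: real
  assumes "0 \<le> wi" "wi \<le> W" "0 < w0"
  shows "wi / W * min 1 (W / (W + w0 - wi)) \<le> min 1 (wi / w0)"
proof (cases "wi = 0")
  case True
  then show ?thesis using assms by simp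
next
  case False
  with assms have "0 < wi" "0 < W" "w0 \<le> W + w0 - wi" by auto
  then have "wi / W * min 1 (W / (W + w0 - wi)) = min (wi / W) (wi / (W + w0 - wi))"
    using assms by (simp add: min_mult_distrib_left field_simps)
  also have "\<dots> \<le> min 1 (wi / w0)"
    using \<open>0 < wi\<close> \<open>0 < W\<close> \<open>w0 \<le> W + w0 - wi\<close> assms
    by (intro min.mono) (auto intro: divide_left_mono)
  finally show ?thesis .
qed

lemma w_i_nonneg:
  assumes "\<pi> (x(i := y)) \<ge> 0" "q y \<ge> 0" "\<And>j. j < n \<Longrightarrow> q (x j) \<ge> 0"
  shows "w_i n \<pi> q i y x \<ge> 0"
  unfolding w_i_def using assms by (auto intro!: divide_nonneg_nonneg mult_nonneg_nonneg prod_nonneg)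

lemma w_0_pos:
  assumes "\<pi> x > 0" "\<And>j. j < n \<Longrightarrow> q (x j) > 0"
  shows "w_0 n \<pi> q x > 0"
  unfolding w_0_def using assms by (intro divide_pos_pos prod_pos) auto

lemma w_i_le_W_sum:
  assumes "i < n" "\<And>k. k < n \<Longrightarrow> w_i n \<pi> q k y x \<ge> 0"
  shows "w_i n \<pi> q i y x \<le> W_sum n \<pi> q y x"
  unfolding W_sum_def using assms by (intro member_le_sum) auto

text \<open>No positivity of q y is needed: for q y = 0 both sides are 0 by division by zero.\<close>
lemma w_i_div_w_0:
  assumes "i < n" "\<And>j. j < n \<Longrightarrow> q (x j) \<noteq> 0"
  shows "w_i n \<pi> q i y x / w_0 n \<pi> q x = \<pi> (x(i := y)) * q (x i) / (\<pi> x * q y)"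
proof -
  define Q where "Q = (\<Prod>j\<in>{..<n} - {i}. q (x j))"
  have "Q \<noteq> 0" unfolding Q_def using assms(2) by auto
  moreover have "(\<Prod>j\<in>{..<n}. q (x j)) = q (x i) * Q"
    unfolding Q_def using assms(1) by (subst prod.remove[of _ i]) auto
  ultimately show ?thesis
    unfolding w_i_def w_0_def Q_def[symmetric] by (simp add: field_simps)
qed

lemma P_SOMA_le_n_P_RAN:
  assumes x: "x \<in> space (sp_n n M)" and x': "x' \<in> space (sp_n n M)"
    and q_nonneg: "\<And>y. y \<in> space M \<Longrightarrow> q y \<ge> 0"
    and pi_nonneg: "\<And>z. z \<in> space (sp_n n M) \<Longrightarrow> \<pi> z \<ge> 0"
    and pi_pos: "\<pi> x > 0" and q_pos: "\<And>j. j < n \<Longrightarrow> q (x j) > 0"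
  shows "P_SOMA n \<pi> q x' x \<le> real n * P_RAN n \<pi> q x' x"
proof -
  have sp: "space (sp_n n M) = PiE {..<n} (\<lambda>_. space M)"
    by (simp add: sp_n_def space_PiM)
  have "q y * (wi / W * min 1 (W / (W + w0 - wi)))
      \<le> real n * (1 / real n * q y * min 1 (\<pi> x' * q (x i) / (\<pi> x * q y)))"
    if i: "i < n" and x'_eq: "x' = x(i := x' i)"
      and defs: "y = x' i" "wi = w_i n \<pi> q i y x" "W = W_sum n \<pi> q y x" "w0 = w_0 n \<pi> q x"
    for i y wi W w0
  proof -
    have y: "y \<in> space M" using x' i defs by (auto simp: sp)
    have "x(k := y) \<in> space (sp_n n M)" if "k < n" for k
      using x y that by (auto simp: sp PiE_def extensional_def)
    then have "w_i n \<pi> q k y x \<ge> 0" if "k < n" for k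
      using that pi_nonneg q_nonneg[OF y] q_pos by (intro w_i_nonneg) (auto intro: less_imp_le)
    then have "0 \<le> wi" "wi \<le> W"
      using i defs w_i_le_W_sum[of i n \<pi> q y x] by auto
    moreover have "0 < w0" using defs w_0_pos pi_pos q_pos by blast
    ultimately have "q y * (wi / W * min 1 (W / (W + w0 - wi))) \<le> q y * min 1 (wi / w0)"
      using q_nonneg[OF y] by (intro mult_left_mono selection_times_acceptance_le)
    also have "wi / w0 = \<pi> x' * q (x i) / (\<pi> x * q y)"
      using defs x'_eq i q_pos w_i_div_w_0[of i n q x \<pi> y] by (metis less_irrefl)
    finally show ?thesis using i by simp
  qed
  then have "P_SOMA n \<pi> q x' x \<le> (\<Sum>i\<in>{i\<in>{..<n}. x' = x(i := x' i)}.
      real n * (1 / real n * q (x' i) * min 1 (\<pi> x' * q (x i) / (\<pi> x * q (x' i)))))"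
    unfolding P_SOMA_def Let_def by (intro sum_mono) (simp add: mult.assoc)
  also have "\<dots> = real n * P_RAN n \<pi> q x' x"
    unfolding P_RAN_def Let_def by (simp add: sum_distrib_left)
  finally show ?thesis .
qed

theorem theorem3:
  fixes M :: "'a measure" and n :: nat
    and \<pi> :: "(nat \<Rightarrow> 'a) \<Rightarrow> real" and q :: "'a \<Rightarrow> real"
  assumes q_meas: "q \<in> borel_measurable M"
    and q_nonneg: "\<And>y. y \<in> space M \<Longrightarrow> q y \<ge> 0"
    and q_prob: "(\<integral>\<^sup>+ y. ennreal (q y) \<partial>M) = 1"
    and pi_meas: "\<pi> \<in> borel_measurable (sp_n n M)"
    and pi_nonneg: "\<And>x. x \<in> space (sp_n n M) \<Longrightarrow> \<pi> x \<ge> 0"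
    and pi_prob: "(\<integral>\<^sup>+ x. ennreal (\<pi> x) \<partial>sp_n n M) = 1"
    and pi_perm: "perm_invariant n \<pi>"
    and well_defined: "AE x in density (sp_n n M) (\<lambda>x. ennreal (\<pi> x)). \<forall>j<n. q (x j) > 0"
  shows "AE x in density (sp_n n M) (\<lambda>x. ennreal (\<pi> x)).
           \<forall>x'\<in>space (sp_n n M). dist_perm n x x' = 1 \<longrightarrow>
             P_SOMA n \<pi> q x' x \<le> real n * P_RAN n \<pi> q x' x"
proof -
  have "AE x in density (sp_n n M) (\<lambda>x. ennreal (\<pi> x)). \<pi> x > 0"
    using pi_meas by (subst AE_density) (auto simp: ennreal_eq_0_iff)
  moreover have "AE x in density (sp_n n M) (\<lambda>x. ennreal (\<pi> x)). x \<in> space (sp_n n M)"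
    using AE_space[of "density (sp_n n M) (\<lambda>x. ennreal (\<pi> x))"] by simp
  ultimately show ?thesis
    using well_defined
    by eventually_elim (auto intro!: P_SOMA_le_n_P_RAN q_nonneg pi_nonneg)
qed

end
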